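(* Let $u\in L^\infty([0,+\infty);W^{1,p}(\mathbb{T}^d;\mathbb{R}^d))$, $p\in(1,\infty)$, be divergence-free. A function $\rho\in L^\infty(\mathbb{T}^d)$ satisfies $\rho\notin\mathcal{F}_u$ if and only if $\rho$ is measurable with respect to the $\sigma$-algebra $\mathcal{N}_u$. Equivalently, \[\mathcal{F}_u=\{\rho\in L^\infty(\mathbb{T}^d)\mid \rho\text{ is not }\mathcal{N}_u\text{-measurable}\}.\]
   Context: $\mathbb{T}^d$ ($d\ge2$) is the torus with Lebesgue measure $\mu$; $\mathcal{M}$ is the $\sigma$-algebra of Lebesgue measurable sets. $\Phi_t$ denotes the DiPerna–Lions measure-preserving flow map of $u$ (for a.e. $x$, $t\mapsto\Phi_t(x)$ solves $\dot\gamma=u(t,\gamma)$, $\gamma(0)=x$), and $\rho\circ\Phi_t^{-1}$ is the solution of $\partial_t\rho+u\cdot\nabla\rho=0$ with datum $\rho$. $\mathcal{F}_u:=\{\rho\in L^\infty(\mathbb{T}^d)\mid\{\rho\circ\Phi_t^{-1}\}_{t\ge0}\text{ is not precompact in }L^2(\mathbb{T}^d)\}$ (the data mixed by $u$), and $\mathcal{N}_u:=\{D\in\mathcal{M}\mid \mathbbm{1}_D\notin\mathcal{F}_u\}$, which is a $\sigma$-algebra. $\mathcal{N}_u$-measurability of $\rho$ means each level set $\{\rho\ge\alpha\}$ coincides up to a null set with an element of $\mathcal{N}_u$. *)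

theory Defs
  imports "HOL-Analysis.Analysis"
begin

section \<open>The torus T^d, modelled as the fundamental cube [0,1)^d\<close>

definition torus_cube :: "(real^'d::finite) set" where
  "torus_cube = {x. \<forall>i. 0 \<le> x$i \<and> x$i < 1}"

abbreviation torus_measure :: "(real^'d::finite) measure" ("\<mu>\<^sub>T") where
  "\<mu>\<^sub>T \<equiv> lebesgue_on torus_cube"

definition torus_proj :: "real^'d::finite \<Rightarrow> real^'d" where
  "torus_proj x = (\<chi> i. frac (x$i))"

definition periodic :: "(real^'d::finite \<Rightarrow> 'b) \<Rightarrow> bool" where
  "periodic f \<longleftrightarrow> (\<forall>x k. (\<forall>i. k$i \<in> \<int>) \<longrightarrow> f (x + k) = f x)"

definition partial_deriv :: "'d::finite \<Rightarrow> (real^'d \<Rightarrow> real) \<Rightarrow> real^'d \<Rightarrow> real" where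
  "partial_deriv i \<phi> x = frechet_derivative \<phi> (at x) (axis i 1)"

fun iter_partial :: "'d::finite list \<Rightarrow> (real^'d \<Rightarrow> real) \<Rightarrow> real^'d \<Rightarrow> real" where
  "iter_partial [] \<phi> = \<phi>"
| "iter_partial (i # is) \<phi> = partial_deriv i (iter_partial is \<phi>)"

definition smooth_fun :: "(real^'d::finite \<Rightarrow> real) \<Rightarrow> bool" where
  "smooth_fun \<phi> \<longleftrightarrow> (\<forall>is x. iter_partial is \<phi> differentiable (at x))"

definition test_fun :: "(real^'d::finite \<Rightarrow> real) \<Rightarrow> bool" where
  "test_fun \<phi> \<longleftrightarrow> smooth_fun \<phi> \<and> periodic \<phi>"

definition weak_partial :: "'d::finite \<Rightarrow> (real^'d \<Rightarrow> real) \<Rightarrow> (real^'d \<Rightarrow> real) \<Rightarrow> bool" where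
  "weak_partial i f g \<longleftrightarrow>
     (\<forall>\<phi>. test_fun \<phi> \<longrightarrow>
        (\<integral>x. f x * partial_deriv i \<phi> x \<partial>\<mu>\<^sub>T) = - (\<integral>x. g x * \<phi> x \<partial>\<mu>\<^sub>T))"

definition Lp_fun :: "real \<Rightarrow> (real^'d::finite \<Rightarrow> real) \<Rightarrow> bool" where
  "Lp_fun p f \<longleftrightarrow> f \<in> borel_measurable \<mu>\<^sub>T \<and> integrable \<mu>\<^sub>T (\<lambda>x. \<bar>f x\<bar> powr p)"

definition W1p_bounded :: "real \<Rightarrow> real \<Rightarrow> (real^'d::finite \<Rightarrow> real^'d) \<Rightarrow> bool" where
  "W1p_bounded p C v \<longleftrightarrow> periodic v \<and>
     (\<exists>G :: 'd \<Rightarrow> 'd \<Rightarrow> real^'d \<Rightarrow> real.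
        (\<forall>j. Lp_fun p (\<lambda>x. v x $ j)) \<and>
        (\<forall>i j. Lp_fun p (G i j) \<and> weak_partial i (\<lambda>x. v x $ j) (G i j)) \<and>
        (\<Sum>j\<in>UNIV. \<integral>x. \<bar>v x $ j\<bar> powr p \<partial>\<mu>\<^sub>T)
          + (\<Sum>i\<in>UNIV. \<Sum>j\<in>UNIV. \<integral>x. \<bar>G i j x\<bar> powr p \<partial>\<mu>\<^sub>T) \<le> C)"

definition Linf_W1p :: "real \<Rightarrow> (real \<Rightarrow> real^'d::finite \<Rightarrow> real^'d) \<Rightarrow> bool" where
  "Linf_W1p p u \<longleftrightarrow>
     (\<lambda>(t, x). u t x) \<in> borel_measurable (borel \<Otimes>\<^sub>M borel) \<and>
     (\<forall>t. periodic (u t)) \<and>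
     (\<exists>C. AE t in lebesgue_on {0..}. W1p_bounded p C (u t))"

definition div_free :: "(real \<Rightarrow> real^'d::finite \<Rightarrow> real^'d) \<Rightarrow> bool" where
  "div_free u \<longleftrightarrow>
     (AE t in lebesgue_on {0..}. \<forall>\<phi>. test_fun \<phi> \<longrightarrow>
        (\<integral>x. (\<Sum>i\<in>UNIV. u t x $ i * partial_deriv i \<phi> x) \<partial>\<mu>\<^sub>T) = 0)"

definition measure_pres :: "(real^'d::finite \<Rightarrow> real^'d) \<Rightarrow> bool" where
  "measure_pres T \<longleftrightarrow> T \<in> measurable \<mu>\<^sub>T \<mu>\<^sub>T \<and> distr \<mu>\<^sub>T \<mu>\<^sub>T T = \<mu>\<^sub>T"

definition is_flow_inverse :: "(real^'d::finite \<Rightarrow> real^'d) \<Rightarrow> (real^'d \<Rightarrow> real^'d) \<Rightarrow> bool" where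
  "is_flow_inverse T S \<longleftrightarrow> measure_pres S \<and>
     (AE x in \<mu>\<^sub>T. S (T x) = x) \<and> (AE x in \<mu>\<^sub>T. T (S x) = x)"

text \<open>t \<mapsto> \<Phi> t x solves \<gamma>' = u(t,\<gamma>), \<gamma>(0) = x on T^d: there is a continuous lift
  \<gamma> to R^d solving the integral form of the ODE, whose projection is \<Phi> t x.\<close>
definition solves_ode :: "(real \<Rightarrow> real^'d::finite \<Rightarrow> real^'d) \<Rightarrow> (real \<Rightarrow> real^'d) \<Rightarrow> real^'d \<Rightarrow> bool" where
  "solves_ode u c x \<longleftrightarrow>
     (\<exists>\<gamma>. continuous_on {0..} \<gamma> \<and>
        (\<forall>t\<ge>0. (\<lambda>s. u s (\<gamma> s)) integrable_on {0..t} \<and>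
               \<gamma> t = x + integral {0..t} (\<lambda>s. u s (\<gamma> s)) \<and>
               torus_proj (\<gamma> t) = c t))"

definition DiPerna_Lions_flow :: "(real \<Rightarrow> real^'d::finite \<Rightarrow> real^'d) \<Rightarrow> (real \<Rightarrow> real^'d \<Rightarrow> real^'d) \<Rightarrow> bool" where
  "DiPerna_Lions_flow u \<Phi> \<longleftrightarrow>
     (\<forall>t\<ge>0. measure_pres (\<Phi> t) \<and> (\<exists>S. is_flow_inverse (\<Phi> t) S)) \<and>
     (AE x in \<mu>\<^sub>T. solves_ode u (\<lambda>t. \<Phi> t x) x)"

definition flow_inv :: "(real \<Rightarrow> real^'d::finite \<Rightarrow> real^'d) \<Rightarrow> real \<Rightarrow> real^'d \<Rightarrow> real^'d" where
  "flow_inv \<Phi> t = (SOME S. is_flow_inverse (\<Phi> t) S)"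

text \<open>\<rho> \<circ> \<Phi>_t^{-1}: the solution of the transport equation at time t.\<close>
definition transported :: "(real \<Rightarrow> real^'d::finite \<Rightarrow> real^'d) \<Rightarrow> real \<Rightarrow> (real^'d \<Rightarrow> real) \<Rightarrow> real^'d \<Rightarrow> real" where
  "transported \<Phi> t \<rho> = \<rho> \<circ> flow_inv \<Phi> t"

definition Linf :: "(real^'d::finite \<Rightarrow> real) set" where
  "Linf = {\<rho>. \<rho> \<in> borel_measurable \<mu>\<^sub>T \<and> (\<exists>C. AE x in \<mu>\<^sub>T. \<bar>\<rho> x\<bar> \<le> C)}"

definition L2_dist :: "(real^'d::finite \<Rightarrow> real) \<Rightarrow> (real^'d \<Rightarrow> real) \<Rightarrow> real" where
  "L2_dist f g = sqrt (\<integral>x. (f x - g x)\<^sup>2 \<partial>\<mu>\<^sub>T)"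

text \<open>Precompact (relatively compact) in the complete space L^2: every sequence
  has an L^2-Cauchy subsequence.\<close>
definition L2_precompact :: "(real^'d::finite \<Rightarrow> real) set \<Rightarrow> bool" where
  "L2_precompact A \<longleftrightarrow>
     (\<forall>f :: nat \<Rightarrow> _. (\<forall>n. f n \<in> A) \<longrightarrow>
        (\<exists>r :: nat \<Rightarrow> nat. strict_mono r \<and>
           (\<forall>e>0. \<exists>N. \<forall>m\<ge>N. \<forall>n\<ge>N. L2_dist (f (r m)) (f (r n)) < e)))"

definition mixed_data :: "(real \<Rightarrow> real^'d::finite \<Rightarrow> real^'d) \<Rightarrow> (real^'d \<Rightarrow> real) set" ("\<F>") where
  "\<F> \<Phi> = {\<rho> \<in> Linf. \<not> L2_precompact {transported \<Phi> t \<rho> | t. t \<ge> 0}}"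

definition N_sets :: "(real \<Rightarrow> real^'d::finite \<Rightarrow> real^'d) \<Rightarrow> (real^'d) set set" ("\<N>") where
  "\<N> \<Phi> = {D \<in> sets \<mu>\<^sub>T. indicator D \<notin> \<F> \<Phi>}"

definition N_measurable :: "(real \<Rightarrow> real^'d::finite \<Rightarrow> real^'d) \<Rightarrow> (real^'d \<Rightarrow> real) \<Rightarrow> bool" where
  "N_measurable \<Phi> \<rho> \<longleftrightarrow>
     (\<forall>\<alpha>. \<exists>D \<in> \<N> \<Phi>. emeasure \<mu>\<^sub>T ({x \<in> torus_cube. \<rho> x \<ge> \<alpha>} - D) = 0
                       \<and> emeasure \<mu>\<^sub>T (D - {x \<in> torus_cube. \<rho> x \<ge> \<alpha>}) = 0)"

end

theory Submission
  imports Defs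
begin

text \<open>
  Only the measure preservation of the inverse flow maps enters the argument; the regularity
  assumptions on \<open>u\<close> merely make the DiPerna-Lions flow available.

  The orbit \<open>{\<rho> \<circ> \<Phi>\<^sub>t\<^sup>-\<^sup>1 | t \<ge> 0}\<close> has Cauchy subsequences in every sequence iff it is
  totally bounded, which is inherited from metric spaces through the metric identification of the
  pseudometric \<open>L\<^sup>2\<close> distance. Composition with a measure-preserving map is an \<open>L\<^sup>2\<close>
  isometry, so total boundedness of orbits survives Lipschitz post-composition, sums and \<open>L\<^sup>2\<close>
  limits. The indicator of a
  superlevel set \<open>{\<rho> \<ge> \<alpha>}\<close> is the \<open>L\<^sup>2\<close> limit of the Lipschitz cut-offs
  \<open>min 1 (max 0 (n (\<rho> - \<alpha>) + 1))\<close>, and conversely \<open>\<rho>\<close> is a uniform limit of step functions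
  built from finitely many of its superlevel sets. Hence \<open>\<rho>\<close> is not mixed iff no indicator of a
  superlevel set of \<open>\<rho>\<close> is mixed, which is \<open>\<N>\<^sub>u\<close>-measurability.
\<close>

section \<open>Total boundedness in pseudometric spaces\<close>

context Metric_space
begin

lemma mtotally_bounded_iff_finite_net:
  assumes "S \<subseteq> M"
  shows "mtotally_bounded S \<longleftrightarrow>
    (\<forall>e>0. \<exists>K. finite K \<and> K \<subseteq> M \<and> S \<subseteq> (\<Union>x\<in>K. mball x e))"
proof
  assume "mtotally_bounded S"
  with assms show "\<forall>e>0. \<exists>K. finite K \<and> K \<subseteq> M \<and> S \<subseteq> (\<Union>x\<in>K. mball x e)"
    unfolding mtotally_bounded_def by (meson subset_trans)
next
  assume net: "\<forall>e>0. \<exists>K. finite K \<and> K \<subseteq> M \<and> S \<subseteq> (\<Union>x\<in>K. mball x e)"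
  show "mtotally_bounded S"
    unfolding mtotally_bounded_def
  proof (intro allI impI)
    fix e :: real
    assume "e > 0"
    then obtain K where K: "finite K" "K \<subseteq> M" "S \<subseteq> (\<Union>x\<in>K. mball x (e/2))"
      using net by (meson half_gt_zero)
    define K' where "K' = {x \<in> K. mball x (e/2) \<inter> S \<noteq> {}}"
    have "\<forall>x\<in>K'. \<exists>y. y \<in> mball x (e/2) \<inter> S"
      by (auto simp: K'_def)
    then obtain c where c: "\<And>x. x \<in> K' \<Longrightarrow> c x \<in> mball x (e/2) \<inter> S"
      by metis
    have "S \<subseteq> (\<Union>y\<in>c ` K'. mball y e)"
    proof
      fix s
      assume "s \<in> S"
      then obtain x where x: "x \<in> K" "s \<in> mball x (e/2)"
        using K(3) by blast
      then have "x \<in> K'"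
        using \<open>s \<in> S\<close> by (auto simp: K'_def)
      have "d (c x) s \<le> d (c x) x + d x s"
        using c[OF \<open>x \<in> K'\<close>] x by (intro triangle) auto
      also have "\<dots> < e"
        using c[OF \<open>x \<in> K'\<close>] x by (simp add: commute)
      finally show "s \<in> (\<Union>y\<in>c ` K'. mball y e)"
        using c[OF \<open>x \<in> K'\<close>] x \<open>x \<in> K'\<close> by auto
    qed
    moreover have "finite (c ` K')" "c ` K' \<subseteq> S"
      using K(1) c by (auto simp: K'_def)
    ultimately show "\<exists>K. finite K \<and> K \<subseteq> S \<and> S \<subseteq> (\<Union>x\<in>K. mball x e)"
      by blast
  qed
qed

end

text \<open>Nonnegativity and symmetry are required everywhere, as in \<^locale>\<open>Metric_space\<close>, so that
  the distance \<open>qdist\<close> of the metric identification below is a metric in that sense.\<close>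

locale Pseudometric =
  fixes M :: "'a set" and d :: "'a \<Rightarrow> 'a \<Rightarrow> real"
  assumes nonneg: "\<And>x y. 0 \<le> d x y"
    and commute: "\<And>x y. d x y = d y x"
    and zero: "\<And>x. x \<in> M \<Longrightarrow> d x x = 0"
    and triangle: "\<And>x y z. x \<in> M \<Longrightarrow> y \<in> M \<Longrightarrow> z \<in> M \<Longrightarrow> d x z \<le> d x y + d y z"
begin

definition PCauchy :: "(nat \<Rightarrow> 'a) \<Rightarrow> bool" where
  "PCauchy \<sigma> \<longleftrightarrow> (\<forall>e>0. \<exists>N. \<forall>n n'. N \<le> n \<longrightarrow> N \<le> n' \<longrightarrow> d (\<sigma> n) (\<sigma> n') < e)"

definition ptotally_bounded :: "'a set \<Rightarrow> bool" where
  "ptotally_bounded A \<longleftrightarrow> (\<forall>e>0. \<exists>F. finite F \<and> F \<subseteq> M \<and> (\<forall>x\<in>A. \<exists>y\<in>F. d x y < e))"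

definition pclass :: "'a \<Rightarrow> 'a set" where
  "pclass x = {y \<in> M. d x y = 0}"

definition qdist :: "'a set \<Rightarrow> 'a set \<Rightarrow> real" where
  "qdist X Y = d (SOME x. x \<in> X) (SOME y. y \<in> Y)"

lemma d_cong:
  assumes "x \<in> M" "x' \<in> M" "y \<in> M" "y' \<in> M" "d x x' = 0" "d y y' = 0"
  shows "d x y = d x' y'"
proof -
  have "d x y \<le> d x' y'"
    using triangle[of x x' y] triangle[of x' y' y] assms by (simp add: commute[of y' y])
  moreover have "d x' y' \<le> d x y"
    using triangle[of x' x y'] triangle[of x y y'] assms by (simp add: commute[of x' x])
  ultimately show ?thesis
    by simp
qed

lemma some_in_pclass: "x \<in> M \<Longrightarrow> (SOME y. y \<in> pclass x) \<in> pclass x"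
  by (rule someI[of _ x]) (simp add: pclass_def zero)

lemma qdist_pclass [simp]:
  assumes "x \<in> M" "y \<in> M"
  shows "qdist (pclass x) (pclass y) = d x y"
proof -
  have "(SOME x'. x' \<in> pclass x) \<in> pclass x" "(SOME y'. y' \<in> pclass y) \<in> pclass y"
    using assms by (simp_all add: some_in_pclass)
  then show ?thesis
    unfolding qdist_def using assms by (intro d_cong[symmetric]) (simp_all add: pclass_def)
qed

lemma pclass_eq_iff:
  assumes "x \<in> M" "y \<in> M"
  shows "pclass x = pclass y \<longleftrightarrow> d x y = 0"
proof
  assume "pclass x = pclass y"
  moreover have "y \<in> pclass y"
    using assms(2) by (simp add: pclass_def zero)
  ultimately have "y \<in> pclass x"
    by simp
  then show "d x y = 0"
    by (simp add: pclass_def)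
next
  assume "d x y = 0"
  then have "d x z = d y z" if "z \<in> M" for z
    using assms that by (intro d_cong) (simp_all add: zero)
  then show "pclass x = pclass y"
    by (auto simp: pclass_def)
qed

sublocale quotient: Metric_space "pclass ` M" qdist
proof
  show "0 \<le> qdist X Y" "qdist X Y = qdist Y X" for X Y
    by (simp_all add: qdist_def nonneg commute)
next
  fix X Y Z
  assume "X \<in> pclass ` M" "Y \<in> pclass ` M" "Z \<in> pclass ` M"
  then obtain x y z where "x \<in> M" "y \<in> M" "z \<in> M" "X = pclass x" "Y = pclass y" "Z = pclass z"
    by blast
  then show "qdist X Y = 0 \<longleftrightarrow> X = Y" "qdist X Z \<le> qdist X Y + qdist Y Z"
    by (simp_all add: pclass_eq_iff triangle)
qed

lemma MCauchy_pclass_iff: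
  assumes "range \<sigma> \<subseteq> M"
  shows "quotient.MCauchy (pclass \<circ> \<sigma>) \<longleftrightarrow> PCauchy \<sigma>"
  using assms by (auto simp: quotient.MCauchy_def PCauchy_def image_subset_iff)

lemma ptotally_bounded_iff_quotient:
  assumes "A \<subseteq> M"
  shows "ptotally_bounded A \<longleftrightarrow> quotient.mtotally_bounded (pclass ` A)"
proof -
  have "(\<exists>F. finite F \<and> F \<subseteq> M \<and> (\<forall>x\<in>A. \<exists>y\<in>F. d x y < e)) \<longleftrightarrow>
      (\<exists>K. finite K \<and> K \<subseteq> pclass ` M \<and> pclass ` A \<subseteq> (\<Union>Y\<in>K. quotient.mball Y e))" for e
  proof
    assume "\<exists>F. finite F \<and> F \<subseteq> M \<and> (\<forall>x\<in>A. \<exists>y\<in>F. d x y < e)"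
    then obtain F where F: "finite F" "F \<subseteq> M" "\<forall>x\<in>A. \<exists>y\<in>F. d x y < e"
      by blast
    have "pclass ` A \<subseteq> (\<Union>Y\<in>pclass ` F. quotient.mball Y e)"
      using F(2,3) assms by (fastforce simp: commute)
    with F(1,2) show "\<exists>K. finite K \<and> K \<subseteq> pclass ` M \<and> pclass ` A \<subseteq> (\<Union>Y\<in>K. quotient.mball Y e)"
      by (intro exI[of _ "pclass ` F"]) auto
  next
    assume "\<exists>K. finite K \<and> K \<subseteq> pclass ` M \<and> pclass ` A \<subseteq> (\<Union>Y\<in>K. quotient.mball Y e)"
    then obtain K where K: "finite K" "K \<subseteq> pclass ` M" "pclass ` A \<subseteq> (\<Union>Y\<in>K. quotient.mball Y e)"
      by blast
    then obtain F where F: "F \<subseteq> M" "finite F" "K = pclass ` F"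
      by (metis finite_subset_image)
    have "\<forall>x\<in>A. \<exists>y\<in>F. d x y < e"
      using K(3) F(1,3) assms by (fastforce simp: commute)
    with F(1,2) show "\<exists>F. finite F \<and> F \<subseteq> M \<and> (\<forall>x\<in>A. \<exists>y\<in>F. d x y < e)"
      by blast
  qed
  then show ?thesis
    using assms by (simp add: ptotally_bounded_def quotient.mtotally_bounded_iff_finite_net image_mono)
qed

lemma ptotally_bounded_sequentially:
  assumes "A \<subseteq> M"
  shows "ptotally_bounded A \<longleftrightarrow> (\<forall>\<sigma>::nat \<Rightarrow> 'a. range \<sigma> \<subseteq> A \<longrightarrow> (\<exists>r. strict_mono r \<and> PCauchy (\<sigma> \<circ> r)))"
  unfolding ptotally_bounded_iff_quotient[OF assms] quotient.mtotally_bounded_sequentially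
proof (intro iffI conjI allI impI)
  fix \<sigma> :: "nat \<Rightarrow> 'a"
  assume seq: "pclass ` A \<subseteq> pclass ` M \<and> (\<forall>\<tau>::nat \<Rightarrow> 'a set. range \<tau> \<subseteq> pclass ` A \<longrightarrow>
      (\<exists>r. strict_mono r \<and> quotient.MCauchy (\<tau> \<circ> r)))"
    and "range \<sigma> \<subseteq> A"
  have "range (pclass \<circ> \<sigma>) \<subseteq> pclass ` A"
    using image_mono[OF \<open>range \<sigma> \<subseteq> A\<close>, of pclass] by (simp add: image_comp)
  then obtain r where "strict_mono r" "quotient.MCauchy (pclass \<circ> \<sigma> \<circ> r)"
    using seq by blast
  moreover have "range (\<sigma> \<circ> r) \<subseteq> M"
    using \<open>range \<sigma> \<subseteq> A\<close> assms by auto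
  ultimately show "\<exists>r. strict_mono r \<and> PCauchy (\<sigma> \<circ> r)"
    by (metis MCauchy_pclass_iff comp_assoc)
next
  fix \<tau> :: "nat \<Rightarrow> 'a set"
  assume seq: "\<forall>\<sigma>::nat \<Rightarrow> 'a. range \<sigma> \<subseteq> A \<longrightarrow> (\<exists>r. strict_mono r \<and> PCauchy (\<sigma> \<circ> r))"
    and "range \<tau> \<subseteq> pclass ` A"
  then have "\<forall>n. \<exists>x. x \<in> A \<and> \<tau> n = pclass x"
    by blast
  then obtain \<sigma> where "\<forall>n. \<sigma> n \<in> A \<and> \<tau> n = pclass (\<sigma> n)"
    by (rule choice[THEN exE])
  then have \<sigma>: "\<And>n. \<sigma> n \<in> A" "\<tau> = pclass \<circ> \<sigma>"
    by auto
  then obtain r where "strict_mono r" "PCauchy (\<sigma> \<circ> r)"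
    using seq by blast
  moreover have "range (\<sigma> \<circ> r) \<subseteq> M"
    using \<sigma>(1) assms by auto
  ultimately show "\<exists>r. strict_mono r \<and> quotient.MCauchy (\<tau> \<circ> r)"
    by (metis MCauchy_pclass_iff \<sigma>(2) comp_assoc)
qed (use assms in auto)

lemma ptotally_bounded_subset: "ptotally_bounded B \<Longrightarrow> A \<subseteq> B \<Longrightarrow> ptotally_bounded A"
  unfolding ptotally_bounded_def by (meson subsetD)

lemma ptotally_bounded_approx:
  assumes "A \<subseteq> M"
    and approx: "\<And>e. e > 0 \<Longrightarrow> \<exists>B\<subseteq>M. ptotally_bounded B \<and> (\<forall>x\<in>A. \<exists>y\<in>B. d x y < e)"
  shows "ptotally_bounded A"
  unfolding ptotally_bounded_def
proof (intro allI impI)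
  fix e :: real
  assume "e > 0"
  then obtain B where B: "B \<subseteq> M" "ptotally_bounded B" "\<forall>x\<in>A. \<exists>y\<in>B. d x y < e/2"
    using approx[of "e/2"] by auto
  then obtain F where F: "finite F" "F \<subseteq> M" "\<forall>y\<in>B. \<exists>z\<in>F. d y z < e/2"
    using \<open>e > 0\<close> unfolding ptotally_bounded_def by (meson half_gt_zero)
  have "\<exists>z\<in>F. d x z < e" if "x \<in> A" for x
  proof -
    obtain y z where yz: "y \<in> B" "d x y < e/2" "z \<in> F" "d y z < e/2"
      using B(3) F(3) \<open>x \<in> A\<close> by meson
    then have "d x z \<le> d x y + d y z"
      using \<open>x \<in> A\<close> assms(1) B(1) F(2) by (intro triangle) auto
    with yz show ?thesis
      by (intro bexI[of _ z]) simp_all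
  qed
  with F(1,2) show "\<exists>F. finite F \<and> F \<subseteq> M \<and> (\<forall>x\<in>A. \<exists>y\<in>F. d x y < e)"
    by blast
qed

lemma ptotally_bounded_image2:
  assumes A: "ptotally_bounded A" "A \<subseteq> M" and B: "ptotally_bounded B" "B \<subseteq> M"
    and f: "\<And>x y. x \<in> M \<Longrightarrow> y \<in> M \<Longrightarrow> f x y \<in> M"
    and lip: "\<And>x y x' y'. x \<in> M \<Longrightarrow> y \<in> M \<Longrightarrow> x' \<in> M \<Longrightarrow> y' \<in> M \<Longrightarrow>
      d (f x y) (f x' y') \<le> L * (d x x' + d y y')"
  shows "ptotally_bounded {f x y | x y. x \<in> A \<and> y \<in> B}"
  unfolding ptotally_bounded_def
proof (intro allI impI)
  fix e :: real
  assume "e > 0"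
  define \<delta> where "\<delta> = e / (2 * \<bar>L\<bar> + 1)"
  have "\<delta> > 0"
    using \<open>e > 0\<close> by (simp add: \<delta>_def add_nonneg_pos)
  then obtain F G where F: "finite F" "F \<subseteq> M" "\<forall>x\<in>A. \<exists>x'\<in>F. d x x' < \<delta>"
    and G: "finite G" "G \<subseteq> M" "\<forall>y\<in>B. \<exists>y'\<in>G. d y y' < \<delta>"
    using A(1) B(1) unfolding ptotally_bounded_def by meson
  have "\<exists>z\<in>(\<lambda>(x', y'). f x' y') ` (F \<times> G). d (f x y) z < e" if xy: "x \<in> A" "y \<in> B" for x y
  proof -
    obtain x' y' where x'y': "x' \<in> F" "d x x' < \<delta>" "y' \<in> G" "d y y' < \<delta>"
      using F(3) G(3) xy by meson
    then have "d (f x y) (f x' y') \<le> L * (d x x' + d y y')"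
      using xy A(2) B(2) F(2) G(2) by (intro lip) auto
    also have "\<dots> \<le> \<bar>L\<bar> * (2 * \<delta>)"
      using x'y' nonneg[of x x'] nonneg[of y y']
      by (intro order_trans[OF abs_ge_self[of "L * _"]]) (simp add: abs_mult mult_left_mono)
    also have "\<dots> < e"
      using \<open>e > 0\<close> by (simp add: \<delta>_def field_simps)
    finally show ?thesis
      using x'y' by (intro bexI[of _ "f x' y'"]) auto
  qed
  moreover have "(\<lambda>(x', y'). f x' y') ` (F \<times> G) \<subseteq> M"
    using F(2) G(2) f by auto
  ultimately show "\<exists>H. finite H \<and> H \<subseteq> M \<and> (\<forall>z\<in>{f x y | x y. x \<in> A \<and> y \<in> B}. \<exists>w\<in>H. d z w < e)"
    using F(1) G(1) by (intro exI[of _ "(\<lambda>(x', y'). f x' y') ` (F \<times> G)"]) auto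
qed

lemma ptotally_bounded_image:
  assumes "ptotally_bounded A" "A \<subseteq> M" and f: "f ` M \<subseteq> M" and "0 \<le> L"
    and lip: "\<And>x y. x \<in> M \<Longrightarrow> y \<in> M \<Longrightarrow> d (f x) (f y) \<le> L * d x y"
  shows "ptotally_bounded (f ` A)"
proof (rule ptotally_bounded_subset)
  show "ptotally_bounded {f x | x y. x \<in> A \<and> y \<in> A}"
  proof (rule ptotally_bounded_image2[OF assms(1,2,1,2)])
    fix x y x' y'
    assume "x \<in> M" "y \<in> M" "x' \<in> M" "y' \<in> M"
    then show "d (f x) (f x') \<le> L * (d x x' + d y y')"
      using lip[of x x'] mult_left_mono[OF _ \<open>0 \<le> L\<close>, of "d x x'" "d x x' + d y y'"]
        nonneg[of y y'] by linarith
  qed (use f in auto)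
  show "f ` A \<subseteq> {f x | x y. x \<in> A \<and> y \<in> A}"
    by blast
qed

lemma finite_imp_ptotally_bounded:
  assumes "finite A" "A \<subseteq> M"
  shows "ptotally_bounded A"
  unfolding ptotally_bounded_def
proof (intro allI impI)
  fix e :: real
  assume "e > 0"
  have "\<forall>x\<in>A. \<exists>y\<in>A. d x y < e"
  proof
    fix x
    assume "x \<in> A"
    with assms(2) \<open>e > 0\<close> show "\<exists>y\<in>A. d x y < e"
      by (intro bexI[of _ x]) (auto simp: zero)
  qed
  with assms show "\<exists>F. finite F \<and> F \<subseteq> M \<and> (\<forall>x\<in>A. \<exists>y\<in>F. d x y < e)"
    by blast
qed

end

section \<open>Real-valued estimates\<close>

lemma power2_add_le_weighted:
  fixes a b t :: real
  assumes "t > 0"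
  shows "(a + b)\<^sup>2 \<le> (1 + t) * a\<^sup>2 + (1 + 1/t) * b\<^sup>2"
proof -
  have "t * ((1 + t) * a\<^sup>2 + (1 + 1/t) * b\<^sup>2) - t * (a + b)\<^sup>2 = (t * a - b)\<^sup>2"
    using assms by (simp add: field_simps power2_eq_square)
  then have "t * (a + b)\<^sup>2 \<le> t * ((1 + t) * a\<^sup>2 + (1 + 1/t) * b\<^sup>2)"
    by (metis diff_ge_0_iff_ge zero_le_power2)
  with assms show ?thesis
    by simp
qed

lemma sqrt_le_add_sqrt_if_weighted_bound:
  fixes I A B :: real
  assumes "0 \<le> A" "0 \<le> B" and bound: "\<And>t. t > 0 \<Longrightarrow> I \<le> (1 + t) * A + (1 + 1/t) * B"
  shows "sqrt I \<le> sqrt A + sqrt B"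
proof (rule field_le_epsilon)
  fix e :: real
  assume "e > 0"
  \<comment> \<open>the optimal weight \<open>sqrt B / sqrt A\<close>, perturbed to avoid dividing by zero\<close>
  define a b where "a = sqrt A + e/2" and "b = sqrt B + e/2"
  have pos: "a > 0" "b > 0"
    using \<open>e > 0\<close> by (simp_all add: a_def b_def add_nonneg_pos assms(1,2))
  have "A \<le> a\<^sup>2" "B \<le> b\<^sup>2"
    using \<open>e > 0\<close> by (simp_all add: a_def b_def sqrt_le_D)
  have "I \<le> (1 + b/a) * A + (1 + a/b) * B"
    using bound[of "b/a"] pos by simp
  also have "\<dots> \<le> (1 + b/a) * a\<^sup>2 + (1 + a/b) * b\<^sup>2"
    using \<open>A \<le> a\<^sup>2\<close> \<open>B \<le> b\<^sup>2\<close> pos by (intro add_mono mult_left_mono) simp_all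
  also have "\<dots> = (a + b)\<^sup>2"
    using pos by (simp add: field_simps power2_eq_square)
  finally have "sqrt I \<le> a + b"
    using pos by (intro real_le_lsqrt) simp_all
  then show "sqrt I \<le> sqrt A + sqrt B + e"
    by (simp add: a_def b_def)
qed

lemma lipschitz_cutoff:
  "(real n)-lipschitz_on UNIV (\<lambda>y. min 1 (max 0 (real n * (y - \<alpha>) + 1)))"
proof (rule lipschitz_onI)
  fix y z :: real
  have "\<bar>min 1 (max 0 u) - min 1 (max 0 v)\<bar> \<le> \<bar>u - v\<bar>" for u v :: real
    by (auto simp: min_def max_def abs_if)
  from this[of "real n * (y - \<alpha>) + 1" "real n * (z - \<alpha>) + 1"]
  show "dist (min 1 (max 0 (real n * (y - \<alpha>) + 1))) (min 1 (max 0 (real n * (z - \<alpha>) + 1)))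
      \<le> real n * dist y z"
    by (simp add: dist_real_def abs_mult flip: right_diff_distrib)
qed simp

lemma cutoff_tendsto:
  "(\<lambda>n. min 1 (max 0 (real n * (y - \<alpha>) + 1))) \<longlonglongrightarrow> (if \<alpha> \<le> y then 1 else 0 :: real)"
proof (cases "\<alpha> \<le> y")
  case True
  then show ?thesis
    by simp
next
  case False
  obtain N :: nat where N: "1 / (\<alpha> - y) < real N"
    using reals_Archimedean2 by blast
  have "min 1 (max 0 (real n * (y - \<alpha>) + 1)) = 0" if "N \<le> n" for n
  proof -
    have "1 < real N * (\<alpha> - y)"
      using N False by (simp add: field_simps)
    also have "\<dots> \<le> real n * (\<alpha> - y)"
      using that False by (intro mult_right_mono) auto
    finally show ?thesis
      by (simp add: algebra_simps)
  qed
  then have "(\<lambda>n. min 1 (max 0 (real n * (y - \<alpha>) + 1))) \<longlonglongrightarrow> 0"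
    by (intro tendsto_eventually) (auto simp: eventually_sequentially)
  with False show ?thesis
    by simp
qed

text \<open>The sum is \<open>\<delta>\<close> times the number of grid levels \<open>-C + (k + 1) \<delta>\<close> below \<open>y\<close>,
  so the approximant is the largest grid point below \<open>y\<close>.\<close>

lemma staircase_approx:
  fixes C \<delta> y :: real
  assumes "0 < \<delta>" "\<bar>y\<bar> \<le> C"
  shows "\<bar>y - (- C + (\<Sum>k<nat \<lceil>2 * C / \<delta>\<rceil>. if - C + real (Suc k) * \<delta> \<le> y then \<delta> else 0))\<bar> \<le> \<delta>"
proof -
  define z where "z = (y + C) / \<delta>"
  have z: "0 \<le> z" "z \<le> 2 * C / \<delta>"
    using assms by (simp_all add: z_def divide_right_mono)
  have step: "- C + real (Suc k) * \<delta> \<le> y \<longleftrightarrow> k < nat \<lfloor>z\<rfloor>" for k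
  proof -
    have "- C + real (Suc k) * \<delta> \<le> y \<longleftrightarrow> real (Suc k) \<le> z"
      using assms(1) by (simp add: z_def field_simps)
    also have "\<dots> \<longleftrightarrow> int (Suc k) \<le> \<lfloor>z\<rfloor>"
      by (simp add: le_floor_iff)
    finally show ?thesis
      by linarith
  qed
  have "nat \<lfloor>z\<rfloor> \<le> nat \<lceil>2 * C / \<delta>\<rceil>"
    by (intro nat_mono order_trans[OF floor_mono[OF z(2)] floor_le_ceiling])
  then have "{k \<in> {..<nat \<lceil>2 * C / \<delta>\<rceil>}. - C + real (Suc k) * \<delta> \<le> y} = {..<nat \<lfloor>z\<rfloor>}"
    unfolding step by auto
  then have "(\<Sum>k<nat \<lceil>2 * C / \<delta>\<rceil>. if - C + real (Suc k) * \<delta> \<le> y then \<delta> else 0)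
      = \<delta> * of_int \<lfloor>z\<rfloor>"
    using z(1) by (simp flip: sum.inter_filter)
  then have "y - (- C + (\<Sum>k<nat \<lceil>2 * C / \<delta>\<rceil>. if - C + real (Suc k) * \<delta> \<le> y then \<delta> else 0))
      = \<delta> * (z - of_int \<lfloor>z\<rfloor>)"
    using assms(1) by (simp add: z_def field_simps)
  moreover have "0 \<le> z - of_int \<lfloor>z\<rfloor>" "z - of_int \<lfloor>z\<rfloor> \<le> 1"
    by linarith+
  ultimately show ?thesis
    using assms(1) by (simp add: abs_mult mult_le_cancel_left1)
qed

lemma AE_indicator_eq_if_null_diffs:
  assumes "A \<in> sets M" "B \<in> sets M" "emeasure M (A - B) = 0" "emeasure M (B - A) = 0"
  shows "AE x in M. (indicator A x :: real) = indicator B x"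
proof -
  have "(A - B) \<union> (B - A) \<in> null_sets M"
    using assms by (intro null_sets.Un null_setsI) auto
  then have "AE x in M. x \<notin> (A - B) \<union> (B - A)"
    by (rule AE_not_in)
  then show ?thesis
    by eventually_elim (auto simp: indicator_def)
qed

section \<open>Bounded functions on the torus and the \<open>L\<^sup>2\<close> distance\<close>

lemma torus_cube_lmeasurable: "(torus_cube :: (real^'d::finite) set) \<in> lmeasurable"
proof -
  have "(torus_cube :: (real^'d) set) = (\<Inter>i. {x. 0 \<le> x$i}) \<inter> (\<Inter>i. {x. x$i < 1})"
    by (auto simp: torus_cube_def)
  also have "\<dots> \<in> sets lebesgue"
    by (intro sets.Int borel_closed borel_open sets.countable_INT' closed_Collect_le
        open_Collect_less continuous_intros) auto
  finally have "(torus_cube :: (real^'d) set) \<in> sets lebesgue" .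
  moreover have "bounded (torus_cube :: (real^'d) set)"
    by (rule bounded_subset[OF bounded_cbox[of 0 1]])
       (auto simp: torus_cube_def mem_box_cart less_imp_le)
  ultimately show ?thesis
    by (simp add: bounded_set_imp_lmeasurable)
qed

lemma finite_measure_torus: "finite_measure (\<mu>\<^sub>T :: (real^'d::finite) measure)"
  by (rule finite_measure_lebesgue_on[OF torus_cube_lmeasurable])

lemma LinfI: "f \<in> borel_measurable \<mu>\<^sub>T \<Longrightarrow> AE x in \<mu>\<^sub>T. \<bar>f x\<bar> \<le> C \<Longrightarrow> f \<in> Linf"
  by (auto simp: Linf_def)

lemma Linf_measurable: "f \<in> Linf \<Longrightarrow> f \<in> borel_measurable \<mu>\<^sub>T"
  by (simp add: Linf_def)

lemma Linf_bounded:
  assumes "f \<in> Linf" obtains C where "AE x in \<mu>\<^sub>T. \<bar>f x\<bar> \<le> C"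
  using assms by (auto simp: Linf_def)

lemma integrable_Linf:
  assumes "(f :: real^'d::finite \<Rightarrow> real) \<in> Linf" shows "integrable \<mu>\<^sub>T f"
proof -
  obtain C where "AE x in \<mu>\<^sub>T. \<bar>f x\<bar> \<le> C"
    using assms by (elim Linf_bounded)
  with Linf_measurable[OF assms] show ?thesis
    by (intro finite_measure.integrable_const_bound[OF finite_measure_torus]) auto
qed

lemma Linf_const: "(\<lambda>x. c) \<in> Linf"
  by (rule LinfI[where C="\<bar>c\<bar>"]) auto

lemma Linf_add:
  assumes "f \<in> Linf" "g \<in> Linf" shows "(\<lambda>x. f x + g x) \<in> Linf"
proof -
  obtain C D where "AE x in \<mu>\<^sub>T. \<bar>f x\<bar> \<le> C" "AE x in \<mu>\<^sub>T. \<bar>g x\<bar> \<le> D"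
    using assms by (elim Linf_bounded)
  then have "AE x in \<mu>\<^sub>T. \<bar>f x + g x\<bar> \<le> C + D"
    by eventually_elim linarith
  with assms show ?thesis
    by (intro LinfI[rotated] borel_measurable_add) (auto intro: Linf_measurable)
qed

lemma Linf_mult:
  assumes "f \<in> Linf" "g \<in> Linf" shows "(\<lambda>x. f x * g x) \<in> Linf"
proof -
  obtain C D where "AE x in \<mu>\<^sub>T. \<bar>f x\<bar> \<le> C" "AE x in \<mu>\<^sub>T. \<bar>g x\<bar> \<le> D"
    using assms by (elim Linf_bounded)
  then have "AE x in \<mu>\<^sub>T. \<bar>f x * g x\<bar> \<le> C * D"
  proof eventually_elim
    case (elim x)
    then show ?case
      unfolding abs_mult by (intro mult_mono) auto
  qed
  with assms show ?thesis
    by (intro LinfI[rotated] borel_measurable_times) (auto intro: Linf_measurable)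
qed

lemma Linf_diff:
  assumes "f \<in> Linf" "g \<in> Linf" shows "(\<lambda>x. f x - g x) \<in> Linf"
proof -
  have "(\<lambda>x. (-1) * g x) \<in> Linf"
    using Linf_const assms(2) by (rule Linf_mult)
  with Linf_add[OF assms(1) this] show ?thesis
    by simp
qed

lemma Linf_sum:
  "finite I \<Longrightarrow> (\<And>i. i \<in> I \<Longrightarrow> f i \<in> Linf) \<Longrightarrow> (\<lambda>x. \<Sum>i\<in>I. f i x) \<in> Linf"
  by (induction I rule: finite_induct) (auto intro: Linf_const Linf_add)

lemma Linf_lipschitz_comp:
  assumes "f \<in> Linf" and h: "L-lipschitz_on UNIV h"
  shows "(\<lambda>x. h (f x)) \<in> Linf"
proof -
  obtain C where C: "AE x in \<mu>\<^sub>T. \<bar>f x\<bar> \<le> C"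
    using assms(1) by (elim Linf_bounded)
  have growth: "\<bar>h y\<bar> \<le> \<bar>h 0\<bar> + L * \<bar>y\<bar>" for y
    using lipschitz_onD[OF h, of y 0] by (simp add: dist_real_def)
  have "AE x in \<mu>\<^sub>T. \<bar>h (f x)\<bar> \<le> \<bar>h 0\<bar> + L * C"
    using C
  proof eventually_elim
    case (elim x)
    then show ?case
      using growth[of "f x"] mult_left_mono[OF elim lipschitz_on_nonneg[OF h]]
      by linarith
  qed
  moreover have "(\<lambda>x. h (f x)) \<in> borel_measurable \<mu>\<^sub>T"
    using measurable_compose[OF Linf_measurable[OF assms(1)]
        borel_measurable_continuous_onI[OF lipschitz_on_continuous_on[OF h]]] .
  ultimately show ?thesis
    by (rule LinfI[rotated])
qed

lemma Linf_comp_measure_pres: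
  assumes S: "measure_pres S" and "f \<in> Linf"
  shows "f \<circ> S \<in> Linf"
proof -
  have S_meas: "S \<in> measurable \<mu>\<^sub>T \<mu>\<^sub>T" and S_distr: "distr \<mu>\<^sub>T \<mu>\<^sub>T S = \<mu>\<^sub>T"
    using S by (auto simp: measure_pres_def)
  have f_meas: "f \<in> borel_measurable \<mu>\<^sub>T"
    using assms(2) by (rule Linf_measurable)
  obtain C where "AE x in \<mu>\<^sub>T. \<bar>f x\<bar> \<le> C"
    using assms(2) by (elim Linf_bounded)
  then have "AE x in distr \<mu>\<^sub>T \<mu>\<^sub>T S. \<bar>f x\<bar> \<le> C"
    by (simp only: S_distr)
  then have "AE x in \<mu>\<^sub>T. \<bar>f (S x)\<bar> \<le> C"
    by (subst (asm) AE_distr_iff[OF S_meas]) (use f_meas in measurable)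
  moreover have "f \<circ> S \<in> borel_measurable \<mu>\<^sub>T"
    by (rule measurable_comp[OF S_meas f_meas])
  ultimately show ?thesis
    unfolding comp_def by (rule LinfI[rotated])
qed

lemma indicator_Linf:
  assumes "D \<in> sets \<mu>\<^sub>T" shows "(indicator D :: real^'d::finite \<Rightarrow> real) \<in> Linf"
  by (rule LinfI[where C=1]) (use assms in \<open>simp_all add: indicator_def\<close>)

lemma integrable_square_Linf: "f \<in> Linf \<Longrightarrow> integrable \<mu>\<^sub>T (\<lambda>x. (f x)\<^sup>2)"
  using integrable_Linf[OF Linf_mult[of f f]] by (simp add: power2_eq_square)

lemma L2_dist_nonneg: "0 \<le> L2_dist f g"
  unfolding L2_dist_def by simp

lemma L2_dist_commute: "L2_dist f g = L2_dist g f"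
  unfolding L2_dist_def by (simp add: power2_commute)

lemma L2_dist_self [simp]: "L2_dist f f = 0"
  unfolding L2_dist_def by simp

lemma L2_Minkowski:
  assumes u: "u \<in> Linf" and v: "v \<in> Linf"
  shows "sqrt (\<integral>x. (u x + v x)\<^sup>2 \<partial>\<mu>\<^sub>T) \<le> sqrt (\<integral>x. (u x)\<^sup>2 \<partial>\<mu>\<^sub>T) + sqrt (\<integral>x. (v x)\<^sup>2 \<partial>\<mu>\<^sub>T)"
proof (rule sqrt_le_add_sqrt_if_weighted_bound)
  fix t :: real
  assume "t > 0"
  have "(\<integral>x. (u x + v x)\<^sup>2 \<partial>\<mu>\<^sub>T) \<le> (\<integral>x. (1 + t) * (u x)\<^sup>2 + (1 + 1/t) * (v x)\<^sup>2 \<partial>\<mu>\<^sub>T)"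
    using \<open>t > 0\<close> u v
    by (intro integral_mono Bochner_Integration.integrable_add integrable_mult_right
        integrable_square_Linf Linf_add power2_add_le_weighted)
  also have "\<dots> = (1 + t) * (\<integral>x. (u x)\<^sup>2 \<partial>\<mu>\<^sub>T) + (1 + 1/t) * (\<integral>x. (v x)\<^sup>2 \<partial>\<mu>\<^sub>T)"
    using u v by (simp add: integrable_square_Linf)
  finally show "(\<integral>x. (u x + v x)\<^sup>2 \<partial>\<mu>\<^sub>T)
      \<le> (1 + t) * (\<integral>x. (u x)\<^sup>2 \<partial>\<mu>\<^sub>T) + (1 + 1/t) * (\<integral>x. (v x)\<^sup>2 \<partial>\<mu>\<^sub>T)" .
qed simp_all

lemma L2_dist_triangle:
  assumes "f \<in> Linf" "g \<in> Linf" "h \<in> Linf"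
  shows "L2_dist f h \<le> L2_dist f g + L2_dist g h"
  using L2_Minkowski[OF Linf_diff[OF assms(1,2)] Linf_diff[OF assms(2,3)]]
  by (simp add: L2_dist_def)

lemma L2_dist_add_le:
  assumes "f \<in> Linf" "g \<in> Linf" "a \<in> Linf" "b \<in> Linf"
  shows "L2_dist (\<lambda>x. f x + g x) (\<lambda>x. a x + b x) \<le> L2_dist f a + L2_dist g b"
proof -
  have "(\<lambda>x. (f x + g x - (a x + b x))\<^sup>2) = (\<lambda>x. ((f x - a x) + (g x - b x))\<^sup>2)"
    by (simp add: algebra_simps)
  then show ?thesis
    using L2_Minkowski[OF Linf_diff[OF assms(1,3)] Linf_diff[OF assms(2,4)]]
    by (simp add: L2_dist_def)
qed

lemma L2_dist_lipschitz_comp_le: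
  assumes f: "f \<in> Linf" and g: "g \<in> Linf" and h: "L-lipschitz_on UNIV h"
  shows "L2_dist (\<lambda>x. h (f x)) (\<lambda>x. h (g x)) \<le> L * L2_dist f g"
proof -
  have L: "0 \<le> L"
    using h by (rule lipschitz_on_nonneg)
  have pointwise: "(h y - h z)\<^sup>2 \<le> L\<^sup>2 * (y - z)\<^sup>2" for y z
  proof -
    have "\<bar>h y - h z\<bar> \<le> L * \<bar>y - z\<bar>"
      using lipschitz_onD[OF h, of y z] by (simp add: dist_real_def)
    then have "\<bar>h y - h z\<bar>\<^sup>2 \<le> (L * \<bar>y - z\<bar>)\<^sup>2"
      by (rule power_mono) simp
    then show ?thesis
      by (simp add: power_mult_distrib)
  qed
  have "(\<integral>x. (h (f x) - h (g x))\<^sup>2 \<partial>\<mu>\<^sub>T) \<le> (\<integral>x. L\<^sup>2 * (f x - g x)\<^sup>2 \<partial>\<mu>\<^sub>T)"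
    using f g Linf_lipschitz_comp[OF f h] Linf_lipschitz_comp[OF g h]
    by (intro integral_mono pointwise integrable_mult_right integrable_square_Linf Linf_diff)
  then have "L2_dist (\<lambda>x. h (f x)) (\<lambda>x. h (g x)) \<le> sqrt (L\<^sup>2 * (\<integral>x. (f x - g x)\<^sup>2 \<partial>\<mu>\<^sub>T))"
    by (simp add: L2_dist_def)
  also have "\<dots> = L * L2_dist f g"
    using L by (simp add: L2_dist_def real_sqrt_mult)
  finally show ?thesis .
qed

lemma L2_dist_eq_0_if_AE_eq:
  assumes "AE x in \<mu>\<^sub>T. f x = g x"
  shows "L2_dist f g = 0"
proof -
  have "(\<integral>x. (f x - g x)\<^sup>2 \<partial>\<mu>\<^sub>T) = 0"
    using assms by (intro integral_eq_zero_AE) auto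
  then show ?thesis
    by (simp add: L2_dist_def)
qed

lemma L2_dist_comp_measure_pres:
  assumes S: "measure_pres S" and "f \<in> Linf" "g \<in> Linf"
  shows "L2_dist (f \<circ> S) (g \<circ> S) = L2_dist f g"
proof -
  have S_meas: "S \<in> measurable \<mu>\<^sub>T \<mu>\<^sub>T" and S_distr: "distr \<mu>\<^sub>T \<mu>\<^sub>T S = \<mu>\<^sub>T"
    using S by (auto simp: measure_pres_def)
  have "(\<lambda>x. (f x - g x)\<^sup>2) \<in> borel_measurable \<mu>\<^sub>T"
    using borel_measurable_integrable[OF integrable_square_Linf[OF Linf_diff[OF assms(2,3)]]] .
  then have "(\<integral>x. (f (S x) - g (S x))\<^sup>2 \<partial>\<mu>\<^sub>T) = (\<integral>x. (f x - g x)\<^sup>2 \<partial>distr \<mu>\<^sub>T \<mu>\<^sub>T S)"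
    by (simp add: integral_distr[OF S_meas])
  then show ?thesis
    by (simp add: L2_dist_def S_distr)
qed

lemma L2_dist_tendsto_0_dominated:
  fixes f :: "real^'d::finite \<Rightarrow> real"
  assumes "f \<in> Linf" "\<And>n. g n \<in> Linf"
    and bound: "\<And>n. AE x in \<mu>\<^sub>T. \<bar>f x - g n x\<bar> \<le> B"
    and lim: "AE x in \<mu>\<^sub>T. (\<lambda>n. g n x) \<longlonglongrightarrow> f x"
  shows "(\<lambda>n. L2_dist f (g n)) \<longlonglongrightarrow> 0"
proof -
  have "(\<lambda>n. \<integral>x. (f x - g n x)\<^sup>2 \<partial>\<mu>\<^sub>T) \<longlonglongrightarrow> (\<integral>x. 0 \<partial>(\<mu>\<^sub>T :: (real^'d) measure))"
  proof (rule integral_dominated_convergence[where w="\<lambda>x. B\<^sup>2"])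
    show "(\<lambda>x. (f x - g n x)\<^sup>2) \<in> borel_measurable \<mu>\<^sub>T" for n
      using assms(1,2) by (intro borel_measurable_power borel_measurable_diff Linf_measurable)
    show "AE x in \<mu>\<^sub>T. norm ((f x - g n x)\<^sup>2) \<le> B\<^sup>2" for n
      using bound[of n]
    proof eventually_elim
      case (elim x)
      then have "\<bar>f x - g n x\<bar>\<^sup>2 \<le> B\<^sup>2"
        by (intro power_mono) auto
      then show ?case
        by simp
    qed
    show "AE x in \<mu>\<^sub>T. (\<lambda>n. (f x - g n x)\<^sup>2) \<longlonglongrightarrow> 0"
      using lim by eventually_elim (auto intro!: tendsto_eq_intros)
  qed (simp_all add: integrable_Linf Linf_const)
  then show ?thesis
    unfolding L2_dist_def by (auto intro!: tendsto_eq_intros)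
qed

lemma L2_dist_le_uniform_bound:
  fixes f g :: "real^'d::finite \<Rightarrow> real"
  assumes "f \<in> Linf" "g \<in> Linf" "0 \<le> B" and bound: "AE x in \<mu>\<^sub>T. \<bar>f x - g x\<bar> \<le> B"
  shows "L2_dist f g \<le> sqrt (measure (\<mu>\<^sub>T :: (real^'d) measure) torus_cube) * B"
proof -
  have "(\<integral>x. (f x - g x)\<^sup>2 \<partial>\<mu>\<^sub>T) \<le> (\<integral>x. B\<^sup>2 \<partial>(\<mu>\<^sub>T :: (real^'d) measure))"
  proof (rule integral_mono_AE)
    show "AE x in \<mu>\<^sub>T. (f x - g x)\<^sup>2 \<le> B\<^sup>2"
      using bound
    proof eventually_elim
      case (elim x)
      then have "\<bar>f x - g x\<bar>\<^sup>2 \<le> B\<^sup>2"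
        by (intro power_mono) auto
      then show ?case
        by simp
    qed
  qed (use assms in \<open>simp_all add: integrable_square_Linf Linf_diff integrable_Linf Linf_const\<close>)
  also have "\<dots> = measure (\<mu>\<^sub>T :: (real^'d) measure) torus_cube * B\<^sup>2"
    by simp
  finally have "L2_dist f g \<le> sqrt (measure (\<mu>\<^sub>T :: (real^'d) measure) torus_cube * B\<^sup>2)"
    unfolding L2_dist_def by (rule real_sqrt_le_mono)
  also have "\<dots> = sqrt (measure (\<mu>\<^sub>T :: (real^'d) measure) torus_cube) * B"
    using \<open>0 \<le> B\<close> by (simp add: real_sqrt_mult)
  finally show ?thesis .
qed

interpretation L2: Pseudometric Linf L2_dist
  by unfold_locales (simp_all add: L2_dist_nonneg L2_dist_commute L2_dist_triangle)

lemma L2_precompact_iff_ptotally_bounded: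
  "A \<subseteq> Linf \<Longrightarrow> L2_precompact A \<longleftrightarrow> L2.ptotally_bounded A"
  by (simp add: L2.ptotally_bounded_sequentially L2_precompact_def L2.PCauchy_def image_subset_iff)

lemma superlevel_set_sets:
  assumes "\<rho> \<in> Linf"
  shows "{x \<in> torus_cube. \<alpha> \<le> \<rho> x} \<in> sets \<mu>\<^sub>T"
proof -
  have "{x \<in> space \<mu>\<^sub>T. \<alpha> \<le> \<rho> x} \<in> sets \<mu>\<^sub>T"
    using Linf_measurable[OF assms] by measurable
  then show ?thesis
    by simp
qed

section \<open>Orbits under measure-preserving maps\<close>

definition orbit :: "(real^'d::finite \<Rightarrow> real^'d) set \<Rightarrow> (real^'d \<Rightarrow> real) \<Rightarrow> (real^'d \<Rightarrow> real) set"
  where "orbit SS f = (\<lambda>S. f \<circ> S) ` SS"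

context
  fixes SS :: "(real^'d::finite \<Rightarrow> real^'d) set"
  assumes measure_pres: "\<forall>S\<in>SS. measure_pres S"
begin

lemma orbit_subset_Linf: "f \<in> Linf \<Longrightarrow> orbit SS f \<subseteq> Linf"
  unfolding orbit_def using Linf_comp_measure_pres measure_pres by blast

lemma ptotally_bounded_orbit_approx:
  assumes "f \<in> Linf"
    and approx: "\<And>e. e > 0 \<Longrightarrow> \<exists>g\<in>Linf. L2.ptotally_bounded (orbit SS g) \<and> L2_dist f g < e"
  shows "L2.ptotally_bounded (orbit SS f)"
proof (rule L2.ptotally_bounded_approx)
  show "orbit SS f \<subseteq> Linf"
    using assms(1) by (rule orbit_subset_Linf)
  fix e :: real
  assume "e > 0"
  then obtain g where g: "g \<in> Linf" "L2.ptotally_bounded (orbit SS g)" "L2_dist f g < e"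
    using approx by blast
  have "L2_dist (f \<circ> S) (g \<circ> S) < e" if "S \<in> SS" for S
    using g assms(1) measure_pres that by (simp add: L2_dist_comp_measure_pres)
  then have "\<forall>k\<in>orbit SS f. \<exists>k'\<in>orbit SS g. L2_dist k k' < e"
    unfolding orbit_def by blast
  with g(1,2) show "\<exists>B\<subseteq>Linf. L2.ptotally_bounded B \<and> (\<forall>k\<in>orbit SS f. \<exists>k'\<in>B. L2_dist k k' < e)"
    using orbit_subset_Linf by blast
qed

lemma ptotally_bounded_orbit_AE_cong:
  assumes "f \<in> Linf" "g \<in> Linf" "AE x in \<mu>\<^sub>T. f x = g x" "L2.ptotally_bounded (orbit SS g)"
  shows "L2.ptotally_bounded (orbit SS f)"
  using assms(2,4) L2_dist_eq_0_if_AE_eq[OF assms(3)]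
  by (intro ptotally_bounded_orbit_approx[OF assms(1)]) auto

lemma ptotally_bounded_orbit_const: "L2.ptotally_bounded (orbit SS (\<lambda>x. c))"
proof (rule L2.ptotally_bounded_subset)
  show "L2.ptotally_bounded {\<lambda>x. c}"
    by (rule L2.finite_imp_ptotally_bounded) (simp_all add: Linf_const)
  show "orbit SS (\<lambda>x. c) \<subseteq> {\<lambda>x. c}"
    by (auto simp: orbit_def comp_def)
qed

lemma ptotally_bounded_orbit_lipschitz_comp:
  assumes f: "f \<in> Linf" "L2.ptotally_bounded (orbit SS f)" and h: "L-lipschitz_on UNIV h"
  shows "L2.ptotally_bounded (orbit SS (\<lambda>x. h (f x)))"
proof -
  have "orbit SS (\<lambda>x. h (f x)) = (\<lambda>k x. h (k x)) ` orbit SS f"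
    by (auto simp: orbit_def image_image comp_def)
  moreover have "L2.ptotally_bounded ((\<lambda>k x. h (k x)) ` orbit SS f)"
  proof (rule L2.ptotally_bounded_image[OF f(2) orbit_subset_Linf[OF f(1)]])
    show "(\<lambda>k x. h (k x)) ` Linf \<subseteq> Linf"
      using Linf_lipschitz_comp[OF _ h] by blast
    show "0 \<le> L"
      using h by (rule lipschitz_on_nonneg)
  qed (rule L2_dist_lipschitz_comp_le[OF _ _ h])
  ultimately show ?thesis
    by simp
qed

lemma ptotally_bounded_orbit_add:
  assumes f: "f \<in> Linf" "L2.ptotally_bounded (orbit SS f)"
    and g: "g \<in> Linf" "L2.ptotally_bounded (orbit SS g)"
  shows "L2.ptotally_bounded (orbit SS (\<lambda>x. f x + g x))"
proof (rule L2.ptotally_bounded_subset)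
  show "L2.ptotally_bounded {(\<lambda>x. a x + b x) | a b. a \<in> orbit SS f \<and> b \<in> orbit SS g}"
    using L2.ptotally_bounded_image2[where f="\<lambda>a b x. a x + b x" and L=1,
        OF f(2) orbit_subset_Linf[OF f(1)] g(2) orbit_subset_Linf[OF g(1)]]
    by (simp add: Linf_add L2_dist_add_le)
  show "orbit SS (\<lambda>x. f x + g x) \<subseteq> {(\<lambda>x. a x + b x) | a b. a \<in> orbit SS f \<and> b \<in> orbit SS g}"
  proof
    fix k
    assume "k \<in> orbit SS (\<lambda>x. f x + g x)"
    then obtain S where "S \<in> SS" "k = (\<lambda>x. f x + g x) \<circ> S"
      by (auto simp: orbit_def)
    then show "k \<in> {(\<lambda>x. a x + b x) | a b. a \<in> orbit SS f \<and> b \<in> orbit SS g}"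
      unfolding orbit_def by (intro CollectI exI[of _ "f \<circ> S"] exI[of _ "g \<circ> S"]) auto
  qed
qed

lemma ptotally_bounded_orbit_sum:
  assumes "finite I" "\<And>i. i \<in> I \<Longrightarrow> f i \<in> Linf"
    and "\<And>i. i \<in> I \<Longrightarrow> L2.ptotally_bounded (orbit SS (f i))"
  shows "L2.ptotally_bounded (orbit SS (\<lambda>x. \<Sum>i\<in>I. f i x))"
  using assms
proof (induction I rule: finite_induct)
  case empty
  then show ?case
    using ptotally_bounded_orbit_const[of 0] by simp
next
  case (insert i I)
  then show ?case
    by (simp add: ptotally_bounded_orbit_add Linf_sum)
qed

lemma ptotally_bounded_orbit_superlevel:
  assumes \<rho>: "\<rho> \<in> Linf" "L2.ptotally_bounded (orbit SS \<rho>)"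
  shows "L2.ptotally_bounded (orbit SS (indicator {x \<in> torus_cube. \<alpha> \<le> \<rho> x}))"
proof (rule ptotally_bounded_orbit_approx)
  define D where "D = {x \<in> torus_cube. \<alpha> \<le> \<rho> x}"
  define cutoff where "cutoff n y = min 1 (max 0 (real n * (y - \<alpha>) + 1))" for n :: nat and y
  show D_Linf: "indicator D \<in> Linf"
    unfolding D_def using \<rho>(1) by (intro indicator_Linf superlevel_set_sets)
  have cutoff_Linf: "(\<lambda>x. cutoff n (\<rho> x)) \<in> Linf"
    and cutoff_orbit: "L2.ptotally_bounded (orbit SS (\<lambda>x. cutoff n (\<rho> x)))" for n
    unfolding cutoff_def
    by (rule Linf_lipschitz_comp[OF \<rho>(1) lipschitz_cutoff],
        rule ptotally_bounded_orbit_lipschitz_comp[OF \<rho> lipschitz_cutoff])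
  have "(\<lambda>n. L2_dist (indicator D) (\<lambda>x. cutoff n (\<rho> x))) \<longlonglongrightarrow> 0"
  proof (rule L2_dist_tendsto_0_dominated[where B=1])
    show "AE x in \<mu>\<^sub>T. \<bar>indicator D x - cutoff n (\<rho> x)\<bar> \<le> 1" for n
      by (simp add: cutoff_def indicator_def)
    show "AE x in \<mu>\<^sub>T. (\<lambda>n. cutoff n (\<rho> x)) \<longlonglongrightarrow> indicator D x"
    proof (rule AE_I2)
      fix x :: "real^'d"
      assume "x \<in> space \<mu>\<^sub>T"
      then show "(\<lambda>n. cutoff n (\<rho> x)) \<longlonglongrightarrow> indicator D x"
        using cutoff_tendsto[of "\<rho> x" \<alpha>] by (auto simp: cutoff_def D_def indicator_def split: if_splits)
    qed
  qed (use D_Linf cutoff_Linf in auto)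
  then show "\<exists>g\<in>Linf. L2.ptotally_bounded (orbit SS g) \<and> L2_dist (indicator D) g < e" if "e > 0" for e
    using cutoff_Linf cutoff_orbit that unfolding lim_sequentially by (force simp: L2_dist_nonneg)
qed

lemma ptotally_bounded_orbit_step_function:
  fixes D :: "nat \<Rightarrow> (real^'d) set"
  assumes "\<And>k. D k \<in> sets \<mu>\<^sub>T" "\<And>k. L2.ptotally_bounded (orbit SS (indicator (D k)))"
  shows "(\<lambda>x. c + (\<Sum>k<K. \<delta> * indicator (D k) x)) \<in> Linf"
    and "L2.ptotally_bounded (orbit SS (\<lambda>x. c + (\<Sum>k<K. \<delta> * indicator (D k) x)))"
proof -
  have scaled: "(\<bar>\<delta>\<bar> * 1)-lipschitz_on UNIV (\<lambda>y. \<delta> * y)"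
    by (intro lipschitz_on_cmult_real lipschitz_on_id)
  have steps: "(\<lambda>x. \<Sum>k<K. \<delta> * indicator (D k) x) \<in> Linf"
    "L2.ptotally_bounded (orbit SS (\<lambda>x. \<Sum>k<K. \<delta> * indicator (D k) x))"
    using Linf_lipschitz_comp[OF indicator_Linf[OF assms(1)] scaled]
      ptotally_bounded_orbit_lipschitz_comp[OF indicator_Linf[OF assms(1)] assms(2) scaled]
    by (intro Linf_sum ptotally_bounded_orbit_sum; simp)+
  show "(\<lambda>x. c + (\<Sum>k<K. \<delta> * indicator (D k) x)) \<in> Linf"
    by (rule Linf_add[OF Linf_const steps(1)])
  show "L2.ptotally_bounded (orbit SS (\<lambda>x. c + (\<Sum>k<K. \<delta> * indicator (D k) x)))"
    by (rule ptotally_bounded_orbit_add[OF Linf_const ptotally_bounded_orbit_const steps])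
qed

lemma ptotally_bounded_orbit_of_superlevels:
  assumes \<rho>: "\<rho> \<in> Linf"
    and superlevels: "\<And>\<alpha>. L2.ptotally_bounded (orbit SS (indicator {x \<in> torus_cube. \<alpha> \<le> \<rho> x}))"
  shows "L2.ptotally_bounded (orbit SS \<rho>)"
proof (rule ptotally_bounded_orbit_approx[OF \<rho>])
  fix e :: real
  assume "e > 0"
  obtain C where C: "AE x in \<mu>\<^sub>T. \<bar>\<rho> x\<bar> \<le> C"
    using \<rho> by (rule Linf_bounded)
  define m where "m = measure (\<mu>\<^sub>T :: (real^'d) measure) torus_cube"
  define \<delta> where "\<delta> = e / (sqrt m + 1)"
  define D where "D k = {x \<in> torus_cube. - C + real (Suc k) * \<delta> \<le> \<rho> x}" for k
  define g where "g x = - C + (\<Sum>k<nat \<lceil>2 * C / \<delta>\<rceil>. \<delta> * indicator (D k) x)" for x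
  have "0 \<le> sqrt m"
    by (simp add: m_def)
  then have "0 < \<delta>"
    using \<open>e > 0\<close> by (simp add: \<delta>_def add_nonneg_pos)
  have D: "D k \<in> sets \<mu>\<^sub>T" "L2.ptotally_bounded (orbit SS (indicator (D k)))" for k
    unfolding D_def using \<rho> superlevels by (simp_all add: superlevel_set_sets)
  have g: "g \<in> Linf" "L2.ptotally_bounded (orbit SS g)"
    unfolding g_def by (rule ptotally_bounded_orbit_step_function[OF D])+
  have "AE x in \<mu>\<^sub>T. \<bar>\<rho> x - g x\<bar> \<le> \<delta>"
    using C AE_space
  proof eventually_elim
    case (elim x)
    then have "g x = - C + (\<Sum>k<nat \<lceil>2 * C / \<delta>\<rceil>. if - C + real (Suc k) * \<delta> \<le> \<rho> x then \<delta> else 0)"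
      unfolding g_def by (intro arg_cong[where f="\<lambda>s. - C + s"] sum.cong) (auto simp: D_def)
    with elim show ?case
      using staircase_approx[OF \<open>0 < \<delta>\<close>] by simp
  qed
  then have "L2_dist \<rho> g \<le> sqrt m * \<delta>"
    unfolding m_def using \<rho> g(1) \<open>0 < \<delta>\<close> by (intro L2_dist_le_uniform_bound) auto
  also have "\<dots> < (sqrt m + 1) * \<delta>"
    using \<open>0 < \<delta>\<close> by simp
  also have "\<dots> = e"
    using \<open>0 \<le> sqrt m\<close> by (simp add: \<delta>_def add_nonneg_eq_0_iff)
  finally show "\<exists>g\<in>Linf. L2.ptotally_bounded (orbit SS g) \<and> L2_dist \<rho> g < e"
    using g by blast
qed

lemma ptotally_bounded_orbit_iff_superlevels:
  assumes "\<rho> \<in> Linf"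
  shows "L2.ptotally_bounded (orbit SS \<rho>) \<longleftrightarrow>
    (\<forall>\<alpha>. L2.ptotally_bounded (orbit SS (indicator {x \<in> torus_cube. \<alpha> \<le> \<rho> x})))"
  using ptotally_bounded_orbit_superlevel[OF assms] ptotally_bounded_orbit_of_superlevels[OF assms]
  by auto

end

section \<open>Mixing by the DiPerna-Lions flow\<close>

lemma measure_pres_flow_inv:
  assumes "DiPerna_Lions_flow u \<Phi>"
  shows "\<forall>S \<in> flow_inv \<Phi> ` {0..}. measure_pres S"
proof
  fix S
  assume "S \<in> flow_inv \<Phi> ` {0..}"
  then obtain t where "0 \<le> t" "S = flow_inv \<Phi> t"
    by auto
  moreover have "\<exists>S. is_flow_inverse (\<Phi> t) S"
    using assms \<open>0 \<le> t\<close> by (simp add: DiPerna_Lions_flow_def)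
  then have "is_flow_inverse (\<Phi> t) (flow_inv \<Phi> t)"
    unfolding flow_inv_def by (rule someI_ex)
  ultimately show "measure_pres S"
    by (simp add: is_flow_inverse_def)
qed

lemma not_mixed_iff_ptotally_bounded_orbit:
  assumes "DiPerna_Lions_flow u \<Phi>" "f \<in> Linf"
  shows "f \<notin> \<F> \<Phi> \<longleftrightarrow> L2.ptotally_bounded (orbit (flow_inv \<Phi> ` {0..}) f)"
proof -
  have "{transported \<Phi> t f | t. t \<ge> 0} = orbit (flow_inv \<Phi> ` {0..}) f"
    by (auto simp: transported_def orbit_def)
  moreover have "orbit (flow_inv \<Phi> ` {0..}) f \<subseteq> Linf"
    by (rule orbit_subset_Linf[OF measure_pres_flow_inv[OF assms(1)] assms(2)])
  ultimately show ?thesis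
    using assms(2) by (simp add: mixed_data_def L2_precompact_iff_ptotally_bounded)
qed

lemma N_measurable_iff_superlevels_not_mixed:
  assumes flow: "DiPerna_Lions_flow u \<Phi>" and \<rho>: "\<rho> \<in> Linf"
  shows "N_measurable \<Phi> \<rho> \<longleftrightarrow>
    (\<forall>\<alpha>. L2.ptotally_bounded (orbit (flow_inv \<Phi> ` {0..}) (indicator {x \<in> torus_cube. \<alpha> \<le> \<rho> x})))"
proof -
  define L where "L \<alpha> = {x \<in> torus_cube. \<alpha> \<le> \<rho> x}" for \<alpha>
  have L: "L \<alpha> \<in> sets \<mu>\<^sub>T" for \<alpha>
    unfolding L_def using \<rho> by (rule superlevel_set_sets)
  have N_iff: "D \<in> \<N> \<Phi> \<longleftrightarrow> L2.ptotally_bounded (orbit (flow_inv \<Phi> ` {0..}) (indicator D))"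
    if "D \<in> sets \<mu>\<^sub>T" for D
    using not_mixed_iff_ptotally_bounded_orbit[OF flow indicator_Linf[OF that]] that
    by (simp add: N_sets_def)
  have "(\<exists>D\<in>\<N> \<Phi>. emeasure \<mu>\<^sub>T (L \<alpha> - D) = 0 \<and> emeasure \<mu>\<^sub>T (D - L \<alpha>) = 0) \<longleftrightarrow>
      L2.ptotally_bounded (orbit (flow_inv \<Phi> ` {0..}) (indicator (L \<alpha>)))" for \<alpha>
  proof
    assume "\<exists>D\<in>\<N> \<Phi>. emeasure \<mu>\<^sub>T (L \<alpha> - D) = 0 \<and> emeasure \<mu>\<^sub>T (D - L \<alpha>) = 0"
    then obtain D where D: "D \<in> \<N> \<Phi>" "emeasure \<mu>\<^sub>T (L \<alpha> - D) = 0" "emeasure \<mu>\<^sub>T (D - L \<alpha>) = 0"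
      by blast
    then have "D \<in> sets \<mu>\<^sub>T"
      by (simp add: N_sets_def)
    have "AE x in \<mu>\<^sub>T. indicator (L \<alpha>) x = (indicator D x :: real)"
      using L \<open>D \<in> sets \<mu>\<^sub>T\<close> D(2,3) by (rule AE_indicator_eq_if_null_diffs)
    moreover have "L2.ptotally_bounded (orbit (flow_inv \<Phi> ` {0..}) (indicator D))"
      using N_iff[OF \<open>D \<in> sets \<mu>\<^sub>T\<close>] D(1) by simp
    ultimately show "L2.ptotally_bounded (orbit (flow_inv \<Phi> ` {0..}) (indicator (L \<alpha>)))"
      by (rule ptotally_bounded_orbit_AE_cong[OF measure_pres_flow_inv[OF flow]
            indicator_Linf[OF L] indicator_Linf[OF \<open>D \<in> sets \<mu>\<^sub>T\<close>]])
  next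
    assume "L2.ptotally_bounded (orbit (flow_inv \<Phi> ` {0..}) (indicator (L \<alpha>)))"
    then have "L \<alpha> \<in> \<N> \<Phi>"
      using N_iff[OF L] by simp
    then show "\<exists>D\<in>\<N> \<Phi>. emeasure \<mu>\<^sub>T (L \<alpha> - D) = 0 \<and> emeasure \<mu>\<^sub>T (D - L \<alpha>) = 0"
      by (intro bexI[of _ "L \<alpha>"]) simp_all
  qed
  then show ?thesis
    by (simp add: N_measurable_def L_def)
qed

theorem theorem4p3:
  fixes u \<Phi> :: "real \<Rightarrow> real^'d \<Rightarrow> real^'d" and p :: real
  assumes "CARD('d) \<ge> 2"
    and "1 < p"
    and "Linf_W1p p u"
    and "div_free u"
    and "DiPerna_Lions_flow u \<Phi>"
    and "\<rho> \<in> Linf"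
  shows "\<rho> \<notin> \<F> \<Phi> \<longleftrightarrow> N_measurable \<Phi> \<rho>"
proof -
  have "\<rho> \<notin> \<F> \<Phi> \<longleftrightarrow> L2.ptotally_bounded (orbit (flow_inv \<Phi> ` {0..}) \<rho>)"
    by (rule not_mixed_iff_ptotally_bounded_orbit[OF assms(5,6)])
  also have "\<dots> \<longleftrightarrow> (\<forall>\<alpha>. L2.ptotally_bounded
      (orbit (flow_inv \<Phi> ` {0..}) (indicator {x \<in> torus_cube. \<alpha> \<le> \<rho> x})))"
    by (rule ptotally_bounded_orbit_iff_superlevels[OF measure_pres_flow_inv[OF assms(5)] assms(6)])
  also have "\<dots> \<longleftrightarrow> N_measurable \<Phi> \<rho>"
    by (rule N_measurable_iff_superlevels_not_mixed[OF assms(5,6), symmetric])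
  finally show ?thesis .
qed

end
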